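(* For $\alpha\in\mathbb{K}^\times$ let $A_{3,\alpha}$ be the evolution algebra over the field $\mathbb{K}$ with natural basis $\{e_1,e_2\}$ such that $e_1^2=e_1$ and $e_2^2=\alpha e_1+e_2$. For $\alpha,\alpha'\in\mathbb{K}^\times$, $A_{3,\alpha}$ is isomorphic to $A_{3,\alpha'}$ as a $\mathbb{K}$-algebra if and only if $\alpha=\alpha'$.
   Context: An evolution algebra over $\mathbb{K}$ is a $\mathbb{K}$-algebra with a basis $\{e_i\}$ (natural basis) such that $e_ie_j=0$ for $i\neq j$. *)

theory Defs
  imports Main
begin

text \<open>A 2-dimensional algebra over a field is modelled on the coordinate space
  'k \<times> 'k, the pair (x1, x2) standing for x1 e1 + x2 e2 in the natural basis.\<close>

definition vadd :: "'k::field \<times> 'k \<Rightarrow> 'k \<times> 'k \<Rightarrow> 'k \<times> 'k" where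
  "vadd x y = (fst x + fst y, snd x + snd y)"

definition vscale :: "'k::field \<Rightarrow> 'k \<times> 'k \<Rightarrow> 'k \<times> 'k" where
  "vscale c x = (c * fst x, c * snd x)"

definition e1 :: "'k::field \<times> 'k" where "e1 = (1, 0)"
definition e2 :: "'k::field \<times> 'k" where "e2 = (0, 1)"

text \<open>Evolution algebra with natural basis {e1, e2} and structure constants
  e1^2 = a11 e1 + a12 e2, e2^2 = a21 e1 + a22 e2, e1 e2 = e2 e1 = 0,
  extended bilinearly.\<close>
definition evo2_mult :: "'k::field \<Rightarrow> 'k \<Rightarrow> 'k \<Rightarrow> 'k \<Rightarrow> 'k \<times> 'k \<Rightarrow> 'k \<times> 'k \<Rightarrow> 'k \<times> 'k" where
  "evo2_mult a11 a12 a21 a22 x y =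
     (fst x * fst y * a11 + snd x * snd y * a21, fst x * fst y * a12 + snd x * snd y * a22)"

definition A3_mult :: "'k::field \<Rightarrow> 'k \<times> 'k \<Rightarrow> 'k \<times> 'k \<Rightarrow> 'k \<times> 'k" where
  "A3_mult \<alpha> = evo2_mult 1 0 \<alpha> 1"

definition alg_iso :: "('k::field \<times> 'k \<Rightarrow> 'k \<times> 'k \<Rightarrow> 'k \<times> 'k) \<Rightarrow> ('k \<times> 'k \<Rightarrow> 'k \<times> 'k \<Rightarrow> 'k \<times> 'k)
    \<Rightarrow> ('k \<times> 'k \<Rightarrow> 'k \<times> 'k) \<Rightarrow> bool" where
  "alg_iso M M' f \<longleftrightarrow> bij f
     \<and> (\<forall>x y. f (vadd x y) = vadd (f x) (f y))
     \<and> (\<forall>c x. f (vscale c x) = vscale c (f x))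
     \<and> (\<forall>x y. f (M x y) = M' (f x) (f y))"

lemma A3_basis: "A3_mult \<alpha> e1 e1 = e1" "A3_mult \<alpha> e2 e2 = vadd (vscale \<alpha> e1) e2"
  "A3_mult \<alpha> e1 e2 = (0,0)" "A3_mult \<alpha> e2 e1 = (0,0)"
  by (simp_all add: A3_mult_def evo2_mult_def e1_def e2_def vadd_def vscale_def)

end

theory Submission
  imports Defs
begin

text \<open>An isomorphism f must send the idempotent e1 to an idempotent (a, b) and e2 to some
  (c, d) with e1 e2 = 0 preserved. Comparing coordinates gives b = 0 (otherwise b = 1, d = 0
  and d^2 = \<alpha> b + d forces \<alpha> = 0), then d = 1 by surjectivity, a = 1 by injectivity and
  finally c = 0: f is the identity, and applying it to e2^2 = \<alpha> e1 + e2 yields \<alpha> = \<alpha>'.\<close>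

lemma A3_mult_Pair: "A3_mult \<alpha> (a, b) (c, d) = (a * c + \<alpha> * (b * d), b * d)"
  by (simp add: A3_mult_def evo2_mult_def algebra_simps)

lemma linear_Pair_eq:
  assumes add: "\<And>x y. f (vadd x y) = vadd (f x) (f y)"
    and scale: "\<And>c x. f (vscale c x) = vscale c (f x)"
  shows "f (x1, x2) = vadd (vscale x1 (f e1)) (vscale x2 (f e2))"
proof -
  have "(x1, x2) = vadd (vscale x1 e1) (vscale x2 e2)"
    by (simp add: vadd_def vscale_def e1_def e2_def)
  then show ?thesis
    by (simp add: add scale)
qed

lemma alg_iso_A3_equations:
  assumes "alg_iso (A3_mult \<alpha>) (A3_mult \<alpha>') f" and "f e1 = (a, b)" and "f e2 = (c, d)"
  shows "f (x1, x2) = (x1 * a + x2 * c, x1 * b + x2 * d)"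
    and "a * c + \<alpha>' * (b * d) = 0" "b * d = 0"
    and "a * a + \<alpha>' * (b * b) = a" "b * b = b"
    and "c * c + \<alpha>' * (d * d) = \<alpha> * a + c" "d * d = \<alpha> * b + d"
proof -
  have mult: "\<And>x y. f (A3_mult \<alpha> x y) = A3_mult \<alpha>' (f x) (f y)"
    using assms(1) unfolding alg_iso_def by blast
  show lin: "f (x1, x2) = (x1 * a + x2 * c, x1 * b + x2 * d)" for x1 x2
    using assms linear_Pair_eq[of f x1 x2] unfolding alg_iso_def
    by (simp add: vadd_def vscale_def mult.commute)
  have "f (A3_mult \<alpha> e1 e2) = A3_mult \<alpha>' (f e1) (f e2)"
    by (rule mult)
  then show "a * c + \<alpha>' * (b * d) = 0" "b * d = 0"
    by (simp_all add: A3_basis assms(2,3) lin A3_mult_Pair)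
  have "f (A3_mult \<alpha> e1 e1) = A3_mult \<alpha>' (f e1) (f e1)"
    by (rule mult)
  then show "a * a + \<alpha>' * (b * b) = a" "b * b = b"
    by (simp_all add: A3_basis assms(2) A3_mult_Pair)
  have "f (A3_mult \<alpha> e2 e2) = A3_mult \<alpha>' (f e2) (f e2)"
    by (rule mult)
  then show "c * c + \<alpha>' * (d * d) = \<alpha> * a + c" "d * d = \<alpha> * b + d"
    by (simp_all add: A3_basis assms(3) lin A3_mult_Pair vadd_def vscale_def e1_def e2_def)
qed

lemma alg_iso_A3_eq_id:
  assumes iso: "alg_iso (A3_mult \<alpha>) (A3_mult \<alpha>') f" and "\<alpha> \<noteq> 0"
  shows "f = id"
proof -
  obtain a b c d where f1: "f e1 = (a, b)" and f2: "f e2 = (c, d)"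
    by fastforce
  note eqs = alg_iso_A3_equations[OF iso f1 f2]
  have bij: "bij f"
    using iso unfolding alg_iso_def by blast
  have b: "b = 0"
  proof (rule ccontr)
    assume "b \<noteq> 0"
    then have "b = 1" and "d = 0"
      using eqs(3,5) by (auto simp: mult_cancel_right2)
    then show False
      using eqs(7) \<open>\<alpha> \<noteq> 0\<close> by simp
  qed
  have d: "d = 1"
  proof (rule ccontr)
    assume "d \<noteq> 1"
    then have "d = 0"
      using eqs(7) b by (auto simp: mult_cancel_right2)
    then have "snd (f x) = 0" for x
      using eqs(1)[of "fst x" "snd x"] b by simp
    moreover obtain x where "f x = (0, 1)"
      using bij by (metis bij_pointE)
    ultimately show False
      by (metis snd_conv zero_neq_one)
  qed
  have a: "a = 1"
  proof (rule ccontr)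
    assume "a \<noteq> 1"
    then have "a = 0"
      using eqs(4) b by (auto simp: mult_cancel_right2)
    then have "f e1 = f (0, 0)"
      using f1 b eqs(1) by simp
    then show False
      using bij_is_inj[OF bij] by (auto dest: injD simp: e1_def)
  qed
  have "c = 0"
    using eqs(2) a b by simp
  then show "f = id"
    using eqs(1) a b d by (auto simp: fun_eq_iff)
qed

theorem lemma3p4:
  fixes \<alpha> \<alpha>' :: "'k::field"
  assumes "\<alpha> \<noteq> 0" and "\<alpha>' \<noteq> 0"
  shows "(\<exists>f. alg_iso (A3_mult \<alpha>) (A3_mult \<alpha>') f) \<longleftrightarrow> \<alpha> = \<alpha>'"
proof
  assume "\<exists>f. alg_iso (A3_mult \<alpha>) (A3_mult \<alpha>') f"
  then obtain f where iso: "alg_iso (A3_mult \<alpha>) (A3_mult \<alpha>') f"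
    by blast
  then have "f (A3_mult \<alpha> e2 e2) = A3_mult \<alpha>' (f e2) (f e2)"
    unfolding alg_iso_def by blast
  then have "A3_mult \<alpha> e2 e2 = A3_mult \<alpha>' e2 e2"
    using alg_iso_A3_eq_id[OF iso assms(1)] by simp
  then show "\<alpha> = \<alpha>'"
    by (simp add: A3_mult_Pair e2_def)
next
  assume "\<alpha> = \<alpha>'"
  then show "\<exists>f. alg_iso (A3_mult \<alpha>) (A3_mult \<alpha>') f"
    by (intro exI[of _ id]) (simp add: alg_iso_def)
qed

end
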